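(* For every positive integer $n$, $$p_{\mathbf 1,\mathbf 0,\binom{n+1}{2}}=\frac{\binom{n+1}{2}!\cdot\bigl(1!\cdot2!\cdots(n-1)!\bigr)}{1!\cdot3!\cdots(2n-1)!}.$$
   Context: $\mathbf 1=(1,\dots,1)\in\mathbb N^n$, so $\lambda(\mathbf 1)=(n,n-1,\dots,1)=\delta_n$, the staircase, with $\binom{n+1}{2}$ cells. $p_{\mathbf 1,\mathbf 0,\binom{n+1}{2}}$ is the number of vertex plane partitions of shape $\delta_n$ whose entries are exactly the distinct numbers $0,1,\dots,\binom{n+1}{2}-1$. A plane partition of shape $\delta_n$ is a filling by nonnegative integers weakly decreasing along rows and down columns; with $\pi_{i,j}$ the entry in row $i$, column $j$ (column $j$ has rows $1,\dots,n+1-j$), it is a vertex plane partition if for every $1\le j\le n-1$: whenever $\pi_{i,j}=\pi_{i,j+1}$ for some $2\le i\le n-j$, then $\pi_{i-1,j}=\pi_{i-1,j+1}$; and for every $1\le i\le n-j$, either $\pi_{i,j+1}<\pi_{i+1,j}$ or $\pi_{i,j+1}=\pi_{i,j}$. *)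

theory Defs
  imports Complex_Main
begin

definition stair_cell :: "nat \<Rightarrow> nat \<Rightarrow> nat \<Rightarrow> bool" where
  "stair_cell n i j \<longleftrightarrow> 1 \<le> i \<and> 1 \<le> j \<and> i + j \<le> n + 1"

text \<open>The filling is a function
  on N x N; values outside the shape are irrelevant (fixed to 0 below).\<close>
definition stair_plane_partition :: "nat \<Rightarrow> (nat \<Rightarrow> nat \<Rightarrow> nat) \<Rightarrow> bool" where
  "stair_plane_partition n \<pi> \<longleftrightarrow>
     (\<forall>i j. stair_cell n i j \<and> stair_cell n i (j + 1) \<longrightarrow> \<pi> i (j + 1) \<le> \<pi> i j) \<and>
     (\<forall>i j. stair_cell n i j \<and> stair_cell n (i + 1) j \<longrightarrow> \<pi> (i + 1) j \<le> \<pi> i j)"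

definition stair_vertex_pp :: "nat \<Rightarrow> (nat \<Rightarrow> nat \<Rightarrow> nat) \<Rightarrow> bool" where
  "stair_vertex_pp n \<pi> \<longleftrightarrow> stair_plane_partition n \<pi> \<and>
     (\<forall>j. 1 \<le> j \<and> j \<le> n - 1 \<longrightarrow>
        (\<forall>i. 2 \<le> i \<and> i \<le> n - j \<and> \<pi> i j = \<pi> i (j + 1) \<longrightarrow> \<pi> (i - 1) j = \<pi> (i - 1) (j + 1)) \<and>
        (\<forall>i. 1 \<le> i \<and> i \<le> n - j \<longrightarrow> \<pi> i (j + 1) < \<pi> (i + 1) j \<or> \<pi> i (j + 1) = \<pi> i j))"

text \<open>p_{1,0,binom(n+1,2)}: number of vertex plane partitions of shape delta_n whose
  entries are exactly the distinct numbers 0, ..., binom(n+1,2) - 1.\<close>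
definition p_stair :: "nat \<Rightarrow> nat" where
  "p_stair n = card {\<pi>. (\<forall>i j. \<not> stair_cell n i j \<longrightarrow> \<pi> i j = 0) \<and>
       stair_vertex_pp n \<pi> \<and>
       bij_betw (\<lambda>(i, j). \<pi> i j) {(i, j). stair_cell n i j} {0..<(n + 1) choose 2}}"

end

theory Submission
  imports Defs "HOL-Computational_Algebra.Polynomial"
begin

text \<open>
  For a filling with pairwise distinct entries the vertex conditions say exactly that the entries
  increase strictly along the relation \<open>shifted_prec\<close>; reading column \<open>j\<close> of \<open>\<delta>\<^sub>n\<close> as row \<open>j\<close>
  of a shifted diagram, \<open>p_stair n\<close> counts the standard shifted tableaux of the strict partition
  \<open>(n, n - 1, \<dots>, 1)\<close>. For every strict partition \<open>\<lambda>\<close> of \<open>N\<close> their number is given by Thrall's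
  formula \<open>N! / (\<Prod>j. \<lambda> j!) \<cdot> \<Prod>j<k. (\<lambda> j - \<lambda> k) / (\<lambda> j + \<lambda> k)\<close>: the count and the
  formula obey the same recursion over the corner carrying the smallest label. For the formula
  this recursion is the identity
    \<open>\<Sum>j. x j \<cdot> \<Prod>k\<noteq>j. ((x j - 1 - x k) (x j + x k)) / ((x j - 1 + x k) (x j - x k)) = \<Sum>j. x j\<close>,
  a comparison of coefficients in Lagrange interpolation. For the staircase the product
  collapses to the stated quotient of factorials.
\<close>

lemma degree_prod_linear_factors:
  fixes c :: "'a \<Rightarrow> 'b::idom"
  shows "degree (\<Prod>k\<in>F. [:- c k, 1:]) = card F"
  by (cases "finite F") (simp_all add: degree_prod_sum_eq)

lemma lead_coeff_prod_linear_factors: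
  fixes c :: "'a \<Rightarrow> 'b::idom"
  shows "lead_coeff (\<Prod>k\<in>F. [:- c k, 1:]) = 1"
  by (simp add: lead_coeff_prod)

lemma coeff_prod_linear_factors_pred:
  fixes c :: "'a \<Rightarrow> 'b::idom"
  assumes "finite F" "F \<noteq> {}"
  shows "coeff (\<Prod>k\<in>F. [:- c k, 1:]) (card F - 1) = - (\<Sum>k\<in>F. c k)"
  using assms
proof (induction F rule: finite_ne_induct)
  case (singleton x)
  then show ?case by simp
next
  case (insert x F)
  have "coeff (\<Prod>k\<in>F. [:- c k, 1:]) (card F) = 1"
    using lead_coeff_prod_linear_factors[of c F] by (simp add: degree_prod_linear_factors)
  moreover obtain m where "card F = Suc m"
    using insert.hyps card_0_eq not0_implies_Suc by blast
  ultimately show ?case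
    using insert by (simp add: algebra_simps)
qed

text \<open>Compare the coefficients of \<open>X ^ (m - 1)\<close> in
  \<open>\<Prod>k. (X - b k) = \<Prod>k. (X - a k) + (\<Sum>j. c j * \<Prod>k\<noteq>j. (X - a k))\<close>, which holds because
  both sides have degree \<open>m\<close>, leading coefficient 1 and agree at the \<open>m\<close> nodes \<open>a j\<close>.\<close>

lemma sum_lagrange_quotients:
  fixes a b :: "'a \<Rightarrow> 'b::field"
  assumes fin: "finite P" and inj: "inj_on a P"
  shows "(\<Sum>j\<in>P. (\<Prod>k\<in>P. a j - b k) / (\<Prod>k\<in>P-{j}. a j - a k)) = (\<Sum>k\<in>P. a k - b k)"
proof (cases "P = {}")
  case False
  define m where "m = card P"
  define c where "c j = (\<Prod>k\<in>P. a j - b k) / (\<Prod>k\<in>P-{j}. a j - a k)" for j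
  define L where "L j = (\<Prod>k\<in>P-{j}. [:- a k, 1:])" for j
  define q where "q = (\<Prod>k\<in>P. [:- a k, 1:]) + (\<Sum>j\<in>P. smult (c j) (L j))"
  have m: "m > 0" "\<And>j. j \<in> P \<Longrightarrow> card (P - {j}) = m - 1"
    using False fin by (auto simp: m_def card_gt_0_iff)
  have L_degree: "j \<in> P \<Longrightarrow> degree (L j) = m - 1" for j
    using m by (simp add: L_def degree_prod_linear_factors)
  have L_lead: "lead_coeff (L j) = 1" for j
    unfolding L_def by (rule lead_coeff_prod_linear_factors)
  have L_zero: "poly (L j) (a i) = 0" if "i \<in> P" "j \<in> P" "i \<noteq> j" for i j
    using fin that by (auto simp: L_def poly_prod)
  have L_self: "poly (L j) (a j) = (\<Prod>k\<in>P-{j}. a j - a k)" for j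
    by (simp add: L_def poly_prod)
  have interpolant_high: "coeff (\<Sum>j\<in>P. smult (c j) (L j)) i = 0" if "i \<ge> m" for i
    using L_degree that m by (auto simp: coeff_sum intro!: sum.neutral coeff_eq_0)
  have "(\<Prod>k\<in>P. [:- b k, 1:]) = q"
  proof (rule poly_eqI_degree_lead_coeff[where n = m and A = "a ` P"])
    show "coeff (\<Prod>k\<in>P. [:- b k, 1:]) m = coeff q m"
      using interpolant_high[of m] lead_coeff_prod_linear_factors[of a P] lead_coeff_prod_linear_factors[of b P]
      by (simp add: q_def m_def degree_prod_linear_factors)
    show "degree q \<le> m"
      using interpolant_high
      by (intro degree_le) (simp add: q_def m_def degree_prod_linear_factors coeff_eq_0)
  next
    fix z assume "z \<in> a ` P"
    then obtain i where i: "i \<in> P" "z = a i" by blast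
    have "(\<Prod>k\<in>P-{i}. a i - a k) \<noteq> 0"
      using fin inj i by (auto dest: inj_onD)
    moreover have "(\<Prod>k\<in>P. a i - a k) = 0"
      using fin i by auto
    moreover have "(\<Sum>j\<in>P-{i}. c j * poly (L j) (a i)) = 0"
      using i L_zero by (intro sum.neutral) auto
    ultimately show "poly (\<Prod>k\<in>P. [:- b k, 1:]) z = poly q z"
      using fin i by (simp add: q_def poly_sum poly_prod sum.remove[of P i] c_def L_self)
  qed (use inj in \<open>simp_all add: m_def card_image degree_prod_linear_factors\<close>)
  then have "coeff (\<Prod>k\<in>P. [:- b k, 1:]) (m - 1) = coeff q (m - 1)"
    by simp
  moreover have "coeff (L j) (m - 1) = 1" if "j \<in> P" for j
    using L_degree[OF that] L_lead[of j] by simp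
  ultimately show ?thesis
    using coeff_prod_linear_factors_pred[OF fin False, of a] coeff_prod_linear_factors_pred[OF fin False, of b]
    by (simp add: m_def q_def coeff_sum c_def sum_subtractf diff_eq_eq)
qed simp

definition linear_extensions :: "'a set \<Rightarrow> ('a \<Rightarrow> 'a \<Rightarrow> bool) \<Rightarrow> ('a \<Rightarrow> nat) set" where
  "linear_extensions S R = {f. (\<forall>x. x \<notin> S \<longrightarrow> f x = 0) \<and>
     (\<forall>x\<in>S. \<forall>y\<in>S. R x y \<longrightarrow> f x < f y) \<and> bij_betw f S {0..<card S}}"

lemma finite_linear_extensions: "finite S \<Longrightarrow> finite (linear_extensions S R)"
  by (rule finite_subset[OF _ finite_set_of_finite_funs[of S "{0..<card S}" 0]])
    (auto simp: linear_extensions_def bij_betw_def)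

lemma linear_extensions_empty: "linear_extensions {} R = {\<lambda>_. 0}"
  by (auto simp: linear_extensions_def bij_betw_def)

lemma bij_betw_insert_zero_Suc:
  assumes "x \<notin> T" "bij_betw g T {0..<m}"
  shows "bij_betw (\<lambda>y. if y = x then 0 else Suc (g y)) (insert x T) {0..<Suc m}"
proof -
  have "bij_betw (Suc \<circ> g) T (Suc ` {0..<m})"
    using assms(2) by (rule bij_betw_trans) simp
  then have "bij_betw (\<lambda>y. if y = x then 0 else Suc (g y)) T (Suc ` {0..<m})"
    by (rule bij_betw_cong[THEN iffD1, rotated]) (use assms(1) in auto)
  then have "bij_betw (\<lambda>y. if y = x then 0 else Suc (g y)) ({x} \<union> T) ({0} \<union> Suc ` {0..<m})"
    by (intro bij_betw_combine) auto
  then show ?thesis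
    by (simp add: atLeast0_lessThan_Suc_eq_insert_0)
qed

lemma bij_betw_pred_remove_zero:
  assumes "bij_betw f S {0..<Suc m}" "x \<in> S" "f x = 0"
  shows "bij_betw (\<lambda>y. f y - 1) (S - {x}) {0..<m}"
proof -
  have "bij_betw f (S - {x}) ({0..<Suc m} - {0})"
    using assms by (intro bij_betw_DiffI) (auto simp: bij_betw_def)
  moreover have "bij_betw (\<lambda>v. v - 1) ({0..<Suc m} - {0}) {0..<m}"
    by (rule bij_betw_byWitness[where f' = Suc]) auto
  ultimately have "bij_betw ((\<lambda>v. v - 1) \<circ> f) (S - {x}) {0..<m}"
    by (rule bij_betw_trans)
  then show ?thesis
    by (simp add: comp_def)
qed

lemma card_linear_extensions_zero_at_minimal:
  assumes fin: "finite S" and x: "x \<in> S" and minimal: "\<forall>y\<in>S. \<not> R y x"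
  shows "card {f \<in> linear_extensions S R. f x = 0} = card (linear_extensions (S - {x}) R)"
proof (rule bij_betw_same_card[of "\<lambda>f y. f y - 1"])
  obtain m where m: "card S = Suc m" "card (S - {x}) = m"
    using fin x by (cases "card S") (auto simp: card_gt_0_iff)
  define lift where "lift g = (\<lambda>y. if y \<in> S - {x} then Suc (g y) else 0)" for g :: "'a \<Rightarrow> nat"
  have positive: "f y \<noteq> 0" if "f \<in> linear_extensions S R" "f x = 0" "y \<in> S - {x}" for f y
  proof -
    have "inj_on f S"
      using that(1) by (simp add: linear_extensions_def bij_betw_def)
    then show ?thesis
      using that x by (metis DiffD1 DiffD2 inj_onD insertI1)
  qed
  show "bij_betw (\<lambda>f y. f y - 1) {f \<in> linear_extensions S R. f x = 0} (linear_extensions (S - {x}) R)"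
  proof (rule bij_betw_byWitness[where f' = lift])
    show "\<forall>f\<in>{f \<in> linear_extensions S R. f x = 0}. lift (\<lambda>y. f y - 1) = f"
      using positive by (auto simp: lift_def linear_extensions_def fun_eq_iff)
    show "\<forall>g\<in>linear_extensions (S - {x}) R. (\<lambda>y. lift g y - 1) = g"
      by (auto simp: lift_def linear_extensions_def fun_eq_iff)
    show "(\<lambda>f y. f y - 1) ` {f \<in> linear_extensions S R. f x = 0} \<subseteq> linear_extensions (S - {x}) R"
    proof clarify
      fix f assume f: "f \<in> linear_extensions S R" "f x = 0"
      then have "bij_betw (\<lambda>y. f y - 1) (S - {x}) {0..<m}"
        using m x by (intro bij_betw_pred_remove_zero) (auto simp: linear_extensions_def)
      then show "(\<lambda>y. f y - 1) \<in> linear_extensions (S - {x}) R"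
        using f positive[OF f] m by (fastforce simp: linear_extensions_def)
    qed
    show "lift ` linear_extensions (S - {x}) R \<subseteq> {f \<in> linear_extensions S R. f x = 0}"
    proof (rule image_subsetI)
      fix g assume g: "g \<in> linear_extensions (S - {x}) R"
      have "bij_betw (\<lambda>y. if y = x then 0 else Suc (g y)) (insert x (S - {x})) {0..<Suc m}"
        using g m by (intro bij_betw_insert_zero_Suc) (auto simp: linear_extensions_def)
      then have "bij_betw (lift g) S {0..<card S}"
        using x m by (auto simp: lift_def insert_absorb elim!: bij_betw_cong[THEN iffD1, rotated])
      moreover have "lift g y < lift g z" if "y \<in> S" "z \<in> S" "R y z" for y z
        using g minimal that by (auto simp: lift_def linear_extensions_def)
      moreover have "\<forall>y. y \<notin> S \<longrightarrow> lift g y = 0" "lift g x = 0"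
        by (simp_all add: lift_def)
      ultimately show "lift g \<in> {f \<in> linear_extensions S R. f x = 0}"
        unfolding linear_extensions_def by blast
    qed
  qed
qed

lemma card_linear_extensions_rec:
  assumes fin: "finite S" and ne: "S \<noteq> {}"
  shows "card (linear_extensions S R) = (\<Sum>x\<in>{x\<in>S. \<forall>y\<in>S. \<not> R y x}. card (linear_extensions (S - {x}) R))"
proof -
  define M where "M = {x\<in>S. \<forall>y\<in>S. \<not> R y x}"
  define E where "E x = {f \<in> linear_extensions S R. f x = 0}" for x
  have "linear_extensions S R = (\<Union>x\<in>M. E x)"
  proof (intro equalityI subsetI)
    fix f assume f: "f \<in> linear_extensions S R"
    then have "0 \<in> f ` S"
      using fin ne by (simp add: linear_extensions_def bij_betw_def card_gt_0_iff)
    then obtain x where x: "x \<in> S" "f x = 0"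
      by (metis imageE)
    have "\<not> R y x" if "y \<in> S" for y
    proof
      assume "R y x"
      then have "f y < f x"
        using f x(1) that by (simp add: linear_extensions_def)
      then show False
        using x(2) by simp
    qed
    then have "x \<in> M"
      using x(1) by (simp add: M_def)
    then show "f \<in> (\<Union>x\<in>M. E x)"
      using f x by (auto simp: E_def)
  qed (auto simp: E_def)
  also have "card \<dots> = (\<Sum>x\<in>M. card (E x))"
  proof (rule card_UN_disjoint)
    have "x = y" if "f \<in> E x" "f \<in> E y" "x \<in> M" "y \<in> M" for f x y
    proof -
      have "inj_on f S"
        using that(1) by (simp add: E_def linear_extensions_def bij_betw_def)
      moreover have "f x = f y" "x \<in> S" "y \<in> S"
        using that by (simp_all add: E_def M_def)
      ultimately show "x = y"
        by (rule inj_onD)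
    qed
    then show "\<forall>x\<in>M. \<forall>y\<in>M. x \<noteq> y \<longrightarrow> E x \<inter> E y = {}"
      by blast
  qed (use fin finite_linear_extensions[OF fin, of R] in \<open>auto simp: M_def E_def\<close>)
  also have "\<dots> = (\<Sum>x\<in>M. card (linear_extensions (S - {x}) R))"
    using fin by (intro sum.cong refl) (auto simp: M_def E_def card_linear_extensions_zero_at_minimal)
  finally show ?thesis
    by (simp add: M_def)
qed

text \<open>Placing cell \<open>(i, j)\<close> at \<open>(j, i + j - 1)\<close> turns \<open>diagram n la\<close>, for a strict
  profile \<open>la\<close>, into the shifted diagram with row lengths \<open>la 1, la 2, \<dots>\<close>. There
  \<open>shifted_prec y x\<close> says that \<open>y\<close> lies right of, below, or diagonally below-right of \<open>x\<close>,
  so linear extensions are standard shifted tableaux read backwards.\<close>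

definition diagram :: "nat \<Rightarrow> (nat \<Rightarrow> nat) \<Rightarrow> (nat \<times> nat) set" where
  "diagram n la = {(i, j). 1 \<le> j \<and> j \<le> n \<and> 1 \<le> i \<and> i \<le> la j}"

fun shifted_prec :: "nat \<times> nat \<Rightarrow> nat \<times> nat \<Rightarrow> bool" where
  "shifted_prec (i', j') (i, j) \<longleftrightarrow>
     (i' = i + 1 \<and> j' = j) \<or> (i' = i \<and> j' = j + 1) \<or> (i' + 1 = i \<and> j' = j + 1)"

definition strict_profile :: "nat \<Rightarrow> (nat \<Rightarrow> nat) \<Rightarrow> bool" where
  "strict_profile n la \<longleftrightarrow> (\<forall>j. 1 \<le> j \<longrightarrow> j < n \<longrightarrow> la (Suc j) = 0 \<or> la (Suc j) < la j)"

definition corner :: "nat \<Rightarrow> (nat \<Rightarrow> nat) \<Rightarrow> nat \<Rightarrow> bool" where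
  "corner n la j \<longleftrightarrow> 1 \<le> j \<and> j \<le> n \<and> 0 < la j \<and> (j = n \<or> la (Suc j) = 0 \<or> Suc (la (Suc j)) < la j)"

definition num_shifted_syt :: "nat \<Rightarrow> (nat \<Rightarrow> nat) \<Rightarrow> nat" where
  "num_shifted_syt n la = card (linear_extensions (diagram n la) shifted_prec)"

lemma diagram_eq_UN: "diagram n la = (\<Union>j\<in>{1..n}. {1..la j} \<times> {j})"
  by (auto simp: diagram_def)

lemma finite_diagram: "finite (diagram n la)"
  by (simp add: diagram_eq_UN)

lemma card_diagram: "card (diagram n la) = (\<Sum>j=1..n. la j)"
  unfolding diagram_eq_UN by (subst card_UN_disjoint) auto

lemma minimal_cells_diagram:
  "{x \<in> diagram n la. \<forall>y\<in>diagram n la. \<not> shifted_prec y x} = (\<lambda>j. (la j, j)) ` {j. corner n la j}"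
proof (intro equalityI subsetI)
  fix x assume x: "x \<in> {x \<in> diagram n la. \<forall>y\<in>diagram n la. \<not> shifted_prec y x}"
  obtain i j where ij: "x = (i, j)" "1 \<le> j" "j \<le> n" "1 \<le> i" "i \<le> la j"
    using x by (auto simp: diagram_def)
  have minimal: "\<And>i' j'. (i', j') \<in> diagram n la \<Longrightarrow> \<not> shifted_prec (i', j') (i, j)"
    using x ij(1) by auto
  have "i = la j"
    using minimal[of "i + 1" j] ij by (force simp: diagram_def)
  moreover have "j = n \<or> la (Suc j) = 0 \<or> Suc (la (Suc j)) < la j"
  proof (rule ccontr)
    assume "\<not> ?thesis"
    then have "j < n" "0 < la (Suc j)" "i \<le> Suc (la (Suc j))"
      using ij \<open>i = la j\<close> by auto
    show False
    proof (cases "i = 1")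
      case True
      then have "(i, j + 1) \<in> diagram n la"
        using \<open>j < n\<close> \<open>0 < la (Suc j)\<close> ij by (simp add: diagram_def)
      then show False
        using minimal by fastforce
    next
      case False
      then have "(i - 1, j + 1) \<in> diagram n la"
        using \<open>j < n\<close> \<open>i \<le> Suc (la (Suc j))\<close> ij by (auto simp: diagram_def)
      then show False
        using minimal False ij(4) by fastforce
    qed
  qed
  ultimately show "x \<in> (\<lambda>j. (la j, j)) ` {j. corner n la j}"
    using ij by (auto simp: corner_def)
next
  fix x assume "x \<in> (\<lambda>j. (la j, j)) ` {j. corner n la j}"
  then obtain j where "corner n la j" "x = (la j, j)"
    by blast
  then show "x \<in> {x \<in> diagram n la. \<forall>y\<in>diagram n la. \<not> shifted_prec y x}"
    by (auto simp: corner_def diagram_def)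
qed

lemma diagram_remove_corner:
  "corner n la j \<Longrightarrow> diagram n la - {(la j, j)} = diagram n (la(j := la j - 1))"
  by (auto simp: diagram_def corner_def)

lemma num_shifted_syt_empty: "(\<Sum>j=1..n. la j) = 0 \<Longrightarrow> num_shifted_syt n la = 1"
  using card_diagram[of n la] finite_diagram[of n la]
  by (simp add: num_shifted_syt_def linear_extensions_empty)

lemma num_shifted_syt_rec:
  assumes "(\<Sum>j=1..n. la j) > 0"
  shows "num_shifted_syt n la = (\<Sum>j | corner n la j. num_shifted_syt n (la(j := la j - 1)))"
proof -
  have "diagram n la \<noteq> {}"
    using assms card_diagram[of n la] by auto
  then have "num_shifted_syt n la
      = (\<Sum>x\<in>(\<lambda>j. (la j, j)) ` {j. corner n la j}. card (linear_extensions (diagram n la - {x}) shifted_prec))"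
    unfolding num_shifted_syt_def minimal_cells_diagram[symmetric]
    by (rule card_linear_extensions_rec[OF finite_diagram])
  also have "\<dots> = (\<Sum>j | corner n la j. num_shifted_syt n (la(j := la j - 1)))"
    by (subst sum.reindex) (auto simp: inj_on_def num_shifted_syt_def diagram_remove_corner)
  finally show ?thesis .
qed

text \<open>The value 1 at \<open>(0, 0)\<close> makes vanishing parts of \<open>la\<close> contribute nothing.\<close>

definition thrall_factor :: "nat \<Rightarrow> nat \<Rightarrow> real" where
  "thrall_factor a b = (if a = 0 \<and> b = 0 then 1 else (real a - real b) / (real a + real b))"

definition index_pairs :: "nat \<Rightarrow> (nat \<times> nat) set" where
  "index_pairs n = (SIGMA j:{1..n}. {j<..n})"

definition thrall :: "nat \<Rightarrow> (nat \<Rightarrow> nat) \<Rightarrow> real" where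
  "thrall n la = fact (\<Sum>j=1..n. la j) / (\<Prod>j=1..n. fact (la j)) *
     (\<Prod>(j, k)\<in>index_pairs n. thrall_factor (la j) (la k))"

text \<open>The factor by which \<open>thrall_factor a b\<close> changes when \<open>a\<close> drops by one.\<close>

definition thrall_ratio :: "nat \<Rightarrow> nat \<Rightarrow> real" where
  "thrall_ratio a b = (if b = 0 then 1 else
     (real a - 1 - real b) / (real a - 1 + real b) * ((real a + real b) / (real a - real b)))"

text \<open>The substitution \<open>a = x (x - 1)\<close>, \<open>b = x (x + 1)\<close> turns this into
  \<open>sum_lagrange_quotients\<close>.\<close>

lemma sum_mult_prod_thrall_ratios:
  fixes x :: "'a \<Rightarrow> real"
  assumes fin: "finite P" and ge1: "\<And>k. k \<in> P \<Longrightarrow> x k \<ge> 1" and inj: "inj_on x P"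
  shows "(\<Sum>j\<in>P. x j * (\<Prod>k\<in>P-{j}. (x j - 1 - x k) / (x j - 1 + x k) * ((x j + x k) / (x j - x k))))
    = (\<Sum>j\<in>P. x j)"
proof -
  define a where "a k = x k * (x k - 1)" for k
  define b where "b k = x k * (x k + 1)" for k
  have "inj_on a P"
  proof (rule inj_onI)
    fix i j assume ij: "i \<in> P" "j \<in> P" "a i = a j"
    then have "(x i - x j) * (x i + x j - 1) = 0" by (simp add: a_def algebra_simps)
    moreover have "x i + x j - 1 > 0" using ge1[OF ij(1)] ge1[OF ij(2)] by linarith
    ultimately show "i = j" using inj ij by (auto dest: inj_onD)
  qed
  have summand: "x j * (\<Prod>k\<in>P-{j}. (x j - 1 - x k) / (x j - 1 + x k) * ((x j + x k) / (x j - x k)))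
      = - (1/2) * ((\<Prod>k\<in>P. a j - b k) / (\<Prod>k\<in>P-{j}. a j - a k))" if "j \<in> P" for j
  proof -
    have "(\<Prod>k\<in>P. a j - b k) = - 2 * x j * (\<Prod>k\<in>P-{j}. a j - b k)"
      using fin that by (simp add: prod.remove a_def b_def algebra_simps)
    moreover have "a j - b k = (x j - 1 - x k) * (x j + x k)" "a j - a k = (x j - 1 + x k) * (x j - x k)" for k
      by (simp_all add: a_def b_def algebra_simps)
    ultimately show ?thesis
      by (simp add: prod_dividef times_divide_times_eq)
  qed
  have "(\<Sum>j\<in>P. x j * (\<Prod>k\<in>P-{j}. (x j - 1 - x k) / (x j - 1 + x k) * ((x j + x k) / (x j - x k))))
      = (\<Sum>j\<in>P. - (1/2) * ((\<Prod>k\<in>P. a j - b k) / (\<Prod>k\<in>P-{j}. a j - a k)))"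
    by (rule sum.cong[OF refl summand])
  also have "\<dots> = - (1/2) * (\<Sum>j\<in>P. (\<Prod>k\<in>P. a j - b k) / (\<Prod>k\<in>P-{j}. a j - a k))"
    by (rule sum_distrib_left[symmetric])
  also have "\<dots> = - (1/2) * (\<Sum>k\<in>P. a k - b k)"
    by (simp add: sum_lagrange_quotients[OF fin \<open>inj_on a P\<close>])
  also have "\<dots> = (\<Sum>j\<in>P. x j)"
    by (simp add: a_def b_def sum_distrib_left algebra_simps flip: sum_negf)
  finally show ?thesis .
qed

lemma thrall_factor_commute: "a \<noteq> 0 \<or> b \<noteq> 0 \<Longrightarrow> thrall_factor b a = - thrall_factor a b"
  by (auto simp: thrall_factor_def add.commute minus_divide_left)

lemma thrall_factor_decr_left:
  assumes "0 < a" "a \<noteq> b"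
  shows "thrall_factor (a - 1) b = thrall_factor a b * thrall_ratio a b"
  using assms by (cases "b = 0") (simp_all add: thrall_factor_def thrall_ratio_def of_nat_diff)

lemma thrall_factor_decr_right:
  assumes "0 < a" "0 < b" "a \<noteq> b"
  shows "thrall_factor b (a - 1) = thrall_factor b a * thrall_ratio a b"
proof -
  have "thrall_factor b (a - 1) = - thrall_factor (a - 1) b" "thrall_factor b a = - thrall_factor a b"
    using assms by (intro thrall_factor_commute; simp)+
  then show ?thesis
    using thrall_factor_decr_left[OF assms(1,3)] by simp
qed

lemma strict_profile_step:
  "strict_profile n la \<Longrightarrow> 1 \<le> m \<Longrightarrow> m < n \<Longrightarrow> 0 < la (Suc m) \<Longrightarrow> la (Suc m) < la m"
  unfolding strict_profile_def by fastforce

lemma strict_profile_less: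
  assumes "strict_profile n la" "1 \<le> j" "j < k" "k \<le> n" "0 < la k"
  shows "la k < la j"
proof -
  have "Suc j \<le> k"
    using assms(3) by simp
  then show ?thesis
    using assms(4,5)
  proof (induction k rule: dec_induct)
    case base
    then show ?case
      using strict_profile_step[OF assms(1,2)] by simp
  next
    case (step m)
    then have "la (Suc m) < la m"
      using strict_profile_step[OF assms(1), of m] assms(2) by simp
    then show ?case
      using step by simp
  qed
qed

lemma prod_thrall_factor_decr:
  assumes st: "strict_profile n la" and j: "1 \<le> j" "j \<le> n" and pos: "0 < la j"
  shows "(\<Prod>(i, k)\<in>index_pairs n. thrall_factor ((la(j := la j - 1)) i) ((la(j := la j - 1)) k))
       = (\<Prod>(i, k)\<in>index_pairs n. thrall_factor (la i) (la k)) * (\<Prod>k\<in>{1..n}-{j}. thrall_ratio (la j) (la k))"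
proof -
  define la' where "la' = la(j := la j - 1)"
  define \<psi> where "\<psi> i k = (if i = j then thrall_ratio (la j) (la k)
    else if k = j then thrall_ratio (la j) (la i) else 1)" for i k
  have factor: "thrall_factor (la' i) (la' k) = thrall_factor (la i) (la k) * \<psi> i k"
    if "(i, k) \<in> index_pairs n" for i k
  proof -
    have ik: "1 \<le> i" "i < k" "k \<le> n"
      using that by (auto simp: index_pairs_def)
    consider "i = j" | "k = j" | "i \<noteq> j" "k \<noteq> j"
      by blast
    then show ?thesis
    proof cases
      case 1
      then have "la k \<noteq> la j"
        using strict_profile_less[OF st j(1), of k] ik pos by (cases "la k = 0") auto
      then show ?thesis
        using 1 ik thrall_factor_decr_left[OF pos] by (simp add: la'_def \<psi>_def)
    next
      case 2
      then have "la j < la i"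
        using strict_profile_less[OF st ik(1), of j] ik pos by auto
      then show ?thesis
        using 2 ik thrall_factor_decr_right[OF pos] by (simp add: la'_def \<psi>_def)
    qed (simp add: la'_def \<psi>_def)
  qed
  define J where "J = index_pairs n \<inter> {(i, k). i = j \<or> k = j}"
  define g where "g k = (if j < k then (j, k) else (k, j))" for k
  have "bij_betw g ({1..n}-{j}) J"
    by (rule bij_betw_byWitness[where f' = "\<lambda>(i, k). if i = j then k else i"])
      (use j in \<open>auto simp: J_def g_def index_pairs_def\<close>)
  have "(\<Prod>(i, k)\<in>index_pairs n. \<psi> i k) = (\<Prod>(i, k)\<in>J. \<psi> i k)"
    by (rule prod.mono_neutral_right) (auto simp: J_def index_pairs_def \<psi>_def split: if_splits)
  also have "\<dots> = (\<Prod>k\<in>{1..n}-{j}. case_prod \<psi> (g k))"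
    using \<open>bij_betw g ({1..n}-{j}) J\<close> by (rule prod.reindex_bij_betw[symmetric])
  also have "\<dots> = (\<Prod>k\<in>{1..n}-{j}. thrall_ratio (la j) (la k))"
    by (rule prod.cong) (auto simp: g_def \<psi>_def)
  finally have "(\<Prod>(i, k)\<in>index_pairs n. \<psi> i k) = (\<Prod>k\<in>{1..n}-{j}. thrall_ratio (la j) (la k))" .
  moreover have "(\<Prod>(i, k)\<in>index_pairs n. thrall_factor (la' i) (la' k))
      = (\<Prod>(i, k)\<in>index_pairs n. thrall_factor (la i) (la k) * \<psi> i k)"
    using factor by (intro prod.cong) auto
  ultimately show ?thesis
    unfolding la'_def[symmetric] by (simp add: split_def prod.distrib)
qed

lemma thrall_decr:
  assumes st: "strict_profile n la" and j: "1 \<le> j" "j \<le> n" and pos: "0 < la j"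
  shows "thrall n (la(j := la j - 1))
    = thrall n la * (real (la j) / real (\<Sum>i=1..n. la i)) * (\<Prod>k\<in>{1..n}-{j}. thrall_ratio (la j) (la k))"
proof -
  define N where "N = (\<Sum>i=1..n. la i)"
  define rest where "rest = (\<Sum>i\<in>{1..n}-{j}. la i)"
  define facts where "facts = (\<Prod>i\<in>{1..n}-{j}. (fact (la i) :: real))"
  have jin: "j \<in> {1..n}"
    using j by simp
  have sums: "N = la j + rest" "(\<Sum>i=1..n. (la(j := la j - 1)) i) = N - 1"
    using jin pos by (simp_all add: N_def rest_def sum.remove)
  have prods: "(\<Prod>i=1..n. (fact (la i) :: real)) = real (la j) * fact (la j - 1) * facts"
    "(\<Prod>i=1..n. (fact ((la(j := la j - 1)) i) :: real)) = fact (la j - 1) * facts"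
    using jin pos by (simp_all add: facts_def prod.remove fact_reduce)
  have "fact N = real N * (fact (N - 1) :: real)"
    using sums pos by (simp add: fact_reduce)
  moreover have "facts \<noteq> 0" "real (la j) \<noteq> 0" "real N \<noteq> 0"
    using pos sums by (simp_all add: facts_def)
  ultimately show ?thesis
    unfolding thrall_def N_def[symmetric] sums(2) prods prod_thrall_factor_decr[OF assms]
    by (simp add: field_simps)
qed

lemma thrall_decr_noncorner:
  assumes st: "strict_profile n la" and j: "1 \<le> j" "j \<le> n" and pos: "0 < la j"
    and "\<not> corner n la j"
  shows "thrall n (la(j := la j - 1)) = 0"
proof -
  have next_part: "j < n" "la (Suc j) \<noteq> 0" "la j \<le> Suc (la (Suc j))"
    using assms by (auto simp: corner_def)
  then have "la (Suc j) = la j - 1"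
    using strict_profile_step[OF st j(1)] by fastforce
  then have "thrall_ratio (la j) (la (Suc j)) = 0"
    using next_part pos by (simp add: thrall_ratio_def of_nat_diff)
  moreover have "Suc j \<in> {1..n}-{j}"
    using next_part by simp
  ultimately have "(\<Prod>k\<in>{1..n}-{j}. thrall_ratio (la j) (la k)) = 0"
    by (intro prod_zero) auto
  then show ?thesis
    by (simp only: thrall_decr[OF st j pos] mult_zero_right)
qed

lemma thrall_rec:
  assumes st: "strict_profile n la" and pos: "0 < (\<Sum>i=1..n. la i)"
  shows "thrall n la = (\<Sum>j | corner n la j. thrall n (la(j := la j - 1)))"
proof -
  define N where "N = (\<Sum>i=1..n. la i)"
  define P where "P = {j\<in>{1..n}. 0 < la j}"
  define x where "x k = real (la k)" for k
  define w where "w j = (\<Prod>k\<in>P-{j}. (x j - 1 - x k) / (x j - 1 + x k) * ((x j + x k) / (x j - x k)))" for j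
  have "inj_on x P"
  proof (rule inj_onI)
    fix i k assume "i \<in> P" "k \<in> P" "x i = x k"
    then show "i = k"
      using strict_profile_less[OF st, of i k] strict_profile_less[OF st, of k i]
      by (cases i k rule: linorder_cases) (auto simp: P_def x_def)
  qed
  moreover have "x k \<ge> 1" if "k \<in> P" for k
    using that by (auto simp: P_def x_def)
  ultimately have identity: "(\<Sum>j\<in>P. x j * w j) = (\<Sum>j\<in>P. x j)"
    unfolding w_def by (intro sum_mult_prod_thrall_ratios) (auto simp: P_def)
  have "(\<Sum>j\<in>P. x j) = real N"
    by (subst sum.mono_neutral_left[of "{1..n}"]) (auto simp: N_def P_def x_def)
  have decr: "thrall n (la(j := la j - 1)) = thrall n la / real N * (x j * w j)" if "j \<in> P" for j
  proof -
    have "(\<Prod>k\<in>{1..n}-{j}. thrall_ratio (la j) (la k)) = (\<Prod>k\<in>P-{j}. thrall_ratio (la j) (la k))"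
      by (rule prod.mono_neutral_right) (auto simp: P_def thrall_ratio_def)
    also have "\<dots> = w j"
      unfolding w_def by (rule prod.cong) (auto simp: P_def thrall_ratio_def x_def)
    finally show ?thesis
      using that thrall_decr[OF st, of j] by (simp add: P_def N_def x_def)
  qed
  have "(\<Sum>j\<in>P. thrall n (la(j := la j - 1))) = thrall n la / real N * (\<Sum>j\<in>P. x j * w j)"
    unfolding sum_distrib_left by (rule sum.cong[OF refl decr])
  also have "\<dots> = thrall n la"
    using pos[folded N_def] by (simp add: identity \<open>(\<Sum>j\<in>P. x j) = real N\<close>)
  also have "(\<Sum>j\<in>P. thrall n (la(j := la j - 1))) = (\<Sum>j | corner n la j. thrall n (la(j := la j - 1)))"
  proof (rule sum.mono_neutral_right)
    show "\<forall>j\<in>P - {j. corner n la j}. thrall n (la(j := la j - 1)) = 0"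
      using thrall_decr_noncorner[OF st] by (auto simp: P_def)
  qed (auto simp: P_def corner_def)
  finally show ?thesis ..
qed

lemma thrall_empty:
  assumes "(\<Sum>i=1..n. la i) = 0"
  shows "thrall n la = 1"
proof -
  have zero: "la i = 0" if "i \<in> {1..n}" for i
    using assms that by simp
  have "(\<Prod>(j, k)\<in>index_pairs n. thrall_factor (la j) (la k)) = 1"
    by (rule prod.neutral) (auto simp: index_pairs_def thrall_factor_def zero)
  moreover have "(\<Prod>j=1..n. (fact (la j) :: real)) = 1"
    by (rule prod.neutral) (simp add: zero)
  ultimately show ?thesis
    using assms by (simp add: thrall_def)
qed

lemma strict_profile_remove_corner:
  assumes "strict_profile n la" "corner n la j"
  shows "strict_profile n (la(j := la j - 1))"
  unfolding strict_profile_def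
proof (intro allI impI)
  fix i assume i: "1 \<le> i" "i < n"
  then have "la (Suc i) = 0 \<or> la (Suc i) < la i"
    using assms(1) by (simp add: strict_profile_def)
  then show "(la(j := la j - 1)) (Suc i) = 0 \<or> (la(j := la j - 1)) (Suc i) < (la(j := la j - 1)) i"
    using assms(2) i by (cases "Suc i = j"; cases "i = j") (auto simp: corner_def)
qed

theorem num_shifted_syt_eq_thrall:
  "strict_profile n la \<Longrightarrow> real (num_shifted_syt n la) = thrall n la"
proof (induction "\<Sum>i=1..n. la i" arbitrary: la rule: less_induct)
  case less
  show ?case
  proof (cases "(\<Sum>i=1..n. la i) = 0")
    case True
    then show ?thesis
      by (simp add: num_shifted_syt_empty thrall_empty)
  next
    case False
    then have pos: "0 < (\<Sum>i=1..n. la i)"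
      by linarith
    have IH: "real (num_shifted_syt n (la(j := la j - 1))) = thrall n (la(j := la j - 1))"
      if j: "corner n la j" for j
    proof (rule less.hyps)
      have jin: "j \<in> {1..n}" "0 < la j"
        using j by (simp_all add: corner_def)
      then have "(\<Sum>i=1..n. la i) = la j + (\<Sum>i\<in>{1..n}-{j}. la i)"
        "(\<Sum>i=1..n. (la(j := la j - 1)) i) = (la j - 1) + (\<Sum>i\<in>{1..n}-{j}. la i)"
        by (simp_all add: sum.remove)
      then show "(\<Sum>i=1..n. (la(j := la j - 1)) i) < (\<Sum>i=1..n. la i)"
        using jin by simp
      show "strict_profile n (la(j := la j - 1))"
        using strict_profile_remove_corner[OF less.prems j] .
    qed
    have "real (num_shifted_syt n la) = (\<Sum>j | corner n la j. real (num_shifted_syt n (la(j := la j - 1))))"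
      by (simp add: num_shifted_syt_rec[OF pos])
    also have "\<dots> = (\<Sum>j | corner n la j. thrall n (la(j := la j - 1)))"
      using IH by simp
    also have "\<dots> = thrall n la"
      by (rule thrall_rec[OF less.prems pos, symmetric])
    finally show ?thesis .
  qed
qed

lemma prod_diff_atLeastLessThan: "(\<Prod>v\<in>{1..<u}. u - v) = fact (u - 1)"
proof -
  have "(\<Prod>v\<in>{1..<u}. u - v) = \<Prod>{1..u - 1}"
    by (rule prod.reindex_bij_witness[where i = "\<lambda>v. u - v" and j = "\<lambda>v. u - v"]) auto
  then show ?thesis
    by (simp add: fact_prod)
qed

lemma fact_mult_prod_add_atLeastLessThan: "fact u * (\<Prod>v\<in>{1..<u}. u + v) = fact (2 * u - 1)"
proof (cases "u = 0")
  case False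
  have "(\<Prod>v\<in>{1..<u}. u + v) = \<Prod>{Suc u..2 * u - 1}"
    by (rule prod.reindex_bij_witness[where i = "\<lambda>v. v - u" and j = "\<lambda>v. u + v"]) auto
  then show ?thesis
    using fact_eq_fact_times[of u "2 * u - 1"] False by simp
qed simp

lemma prod_diff_div_add_atLeastLessThan:
  "(\<Prod>v\<in>{1..<u}. (real u - real v) / (real u + real v)) = fact (u - 1) * fact u / fact (2 * u - 1)"
proof -
  have "(\<Prod>v\<in>{1..<u}. real u - real v) = real (\<Prod>v\<in>{1..<u}. u - v)"
    unfolding of_nat_prod by (rule prod.cong) (auto simp: of_nat_diff)
  then have numerator: "(\<Prod>v\<in>{1..<u}. real u - real v) = fact (u - 1)"
    by (simp only: prod_diff_atLeastLessThan of_nat_fact)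
  have "fact u * (\<Prod>v\<in>{1..<u}. real u + real v) = fact (2 * u - 1)"
    using arg_cong[OF fact_mult_prod_add_atLeastLessThan[of u], of real] by simp
  then have denominator: "(\<Prod>v\<in>{1..<u}. real u + real v) = fact (2 * u - 1) / fact u"
    by (simp add: eq_divide_eq mult.commute)
  show ?thesis
    by (simp only: prod_dividef numerator denominator divide_divide_eq_right)
qed

lemma prod_thrall_factor_staircase:
  "(\<Prod>(j, k)\<in>index_pairs n. thrall_factor (n + 1 - j) (n + 1 - k))
     = (\<Prod>u=1..n. fact (u - 1) * fact u / fact (2 * u - 1))"
proof -
  have "(\<Prod>(j, k)\<in>index_pairs n. thrall_factor (n + 1 - j) (n + 1 - k))
      = (\<Prod>(u, v)\<in>(SIGMA u:{1..n}. {1..<u}). (real u - real v) / (real u + real v))"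
    by (rule prod.reindex_bij_witness[where i = "\<lambda>(u, v). (n + 1 - u, n + 1 - v)"
          and j = "\<lambda>(j, k). (n + 1 - j, n + 1 - k)"])
      (auto simp: index_pairs_def thrall_factor_def of_nat_diff)
  also have "\<dots> = (\<Prod>u=1..n. \<Prod>v\<in>{1..<u}. (real u - real v) / (real u + real v))"
    by (simp add: prod.Sigma split_def)
  also have "\<dots> = (\<Prod>u=1..n. fact (u - 1) * fact u / fact (2 * u - 1))"
    by (rule prod.cong[OF refl prod_diff_div_add_atLeastLessThan])
  finally show ?thesis .
qed

lemma sum_staircase: "(\<Sum>j=1..n. n + 1 - j) = (n + 1) choose 2"
proof -
  have "(\<Sum>j=1..n. n + 1 - j) = \<Sum>{0..n}"
    by (rule sum.reindex_bij_witness_not_neutral[where i = "\<lambda>k. n + 1 - k" and j = "\<lambda>j. n + 1 - j"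
          and S' = "{}" and T' = "{0}"]) auto
  then show ?thesis
    by (simp add: gauss_sum_nat choose_two mult.commute)
qed

lemma thrall_staircase:
  assumes "n \<ge> 1"
  shows "thrall n (\<lambda>j. n + 1 - j)
    = fact ((n + 1) choose 2) * (\<Prod>k=1..n-1. fact k) / (\<Prod>k=1..n. fact (2 * k - 1))"
proof -
  have "(\<Prod>j=1..n. (fact (n + 1 - j) :: real)) = (\<Prod>k=1..n. fact k)"
    using prod.atLeastAtMost_rev[of "\<lambda>k. (fact k :: real)" 1 n] by (simp add: add.commute)
  moreover have "(\<Prod>u=1..n. (fact (u - 1) :: real)) = (\<Prod>k=1..n-1. fact k)"
    using assms prod.shift_bounds_cl_Suc_ivl[of "\<lambda>k. (fact (k - 1) :: real)" 0 "n - 1"]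
    by (simp add: prod.atLeast_Suc_atMost)
  ultimately show ?thesis
    unfolding thrall_def sum_staircase prod_thrall_factor_staircase by (simp add: prod_dividef prod.distrib)
qed

lemma diagram_staircase: "diagram n (\<lambda>j. n + 1 - j) = {(i, j). stair_cell n i j}"
  by (auto simp: diagram_def stair_cell_def)

lemma strict_profile_staircase: "strict_profile n (\<lambda>j. n + 1 - j)"
  by (auto simp: strict_profile_def)

lemma stair_vertex_pp_iff_shifted_prec_mono:
  assumes inj: "inj_on (\<lambda>(i, j). \<pi> i j) {(i, j). stair_cell n i j}"
  shows "stair_vertex_pp n \<pi> \<longleftrightarrow>
    (\<forall>x\<in>{(i, j). stair_cell n i j}. \<forall>y\<in>{(i, j). stair_cell n i j}.
       shifted_prec x y \<longrightarrow> (\<lambda>(i, j). \<pi> i j) x < (\<lambda>(i, j). \<pi> i j) y)"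
    (is "_ \<longleftrightarrow> ?mono")
proof
  assume vpp: "stair_vertex_pp n \<pi>"
  have distinct: "\<pi> a b \<noteq> \<pi> c d" if "stair_cell n a b" "stair_cell n c d" "(a, b) \<noteq> (c, d)" for a b c d
    using inj_onD[OF inj, of "(a, b)" "(c, d)"] that by auto
  have less: "\<pi> a b < \<pi> c d"
    if cells: "stair_cell n a b" "stair_cell n c d" and prec: "shifted_prec (a, b) (c, d)" for a b c d
  proof -
    from prec consider "(a = c + 1 \<and> b = d) \<or> (a = c \<and> b = d + 1)" | "a + 1 = c" "b = d + 1"
      by auto
    then show ?thesis
    proof cases
      case 1
      then have "\<pi> a b \<le> \<pi> c d"
        using vpp cells unfolding stair_vertex_pp_def stair_plane_partition_def by blast
      then show ?thesis
        using distinct[OF cells] 1 by auto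
    next
      case 2
      then have "1 \<le> d" "d \<le> n - 1" "1 \<le> a" "a \<le> n - d"
        using cells by (auto simp: stair_cell_def)
      then have "\<pi> a (d + 1) < \<pi> (a + 1) d \<or> \<pi> a (d + 1) = \<pi> a d"
        using vpp unfolding stair_vertex_pp_def by blast
      moreover have "\<pi> a (d + 1) \<noteq> \<pi> a d"
        using distinct[of a "d + 1" a d] cells 2 by (auto simp: stair_cell_def)
      ultimately show ?thesis
        using 2 by simp
    qed
  qed
  then show ?mono
    by (auto simp del: shifted_prec.simps)
next
  assume ?mono
  then have less: "\<pi> a b < \<pi> c d"
    if "stair_cell n a b" "stair_cell n c d" "shifted_prec (a, b) (c, d)" for a b c d
    using that by (auto simp del: shifted_prec.simps)
  show "stair_vertex_pp n \<pi>"
    unfolding stair_vertex_pp_def stair_plane_partition_def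
  proof (intro conjI allI impI)
    fix i j assume "stair_cell n i j \<and> stair_cell n i (j + 1)"
    then show "\<pi> i (j + 1) \<le> \<pi> i j"
      using less[of i "j + 1" i j] by simp
  next
    fix i j assume "stair_cell n i j \<and> stair_cell n (i + 1) j"
    then show "\<pi> (i + 1) j \<le> \<pi> i j"
      using less[of "i + 1" j i j] by simp
  next
    fix j i assume "1 \<le> j \<and> j \<le> n - 1" "2 \<le> i \<and> i \<le> n - j \<and> \<pi> i j = \<pi> i (j + 1)"
    then have "i + j \<le> n" "1 \<le> j" "2 \<le> i" "\<pi> i j = \<pi> i (j + 1)"
      by arith+
    then show "\<pi> (i - 1) j = \<pi> (i - 1) (j + 1)"
      using less[of i "j + 1" i j] by (simp add: stair_cell_def)
  next
    fix j i assume "1 \<le> j \<and> j \<le> n - 1" "1 \<le> i \<and> i \<le> n - j"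
    then have "i + j \<le> n" "1 \<le> j" "1 \<le> i"
      by arith+
    then show "\<pi> i (j + 1) < \<pi> (i + 1) j \<or> \<pi> i (j + 1) = \<pi> i j"
      using less[of i "j + 1" "i + 1" j] by (simp add: stair_cell_def)
  qed
qed

lemma p_stair_eq_num_shifted_syt: "p_stair n = num_shifted_syt n (\<lambda>j. n + 1 - j)"
proof -
  define C where "C = {(i, j). stair_cell n i j}"
  define fillings where "fillings = {\<pi>. (\<forall>i j. \<not> stair_cell n i j \<longrightarrow> \<pi> i j = 0) \<and>
    stair_vertex_pp n \<pi> \<and> bij_betw (\<lambda>(i, j). \<pi> i j) C {0..<(n + 1) choose 2}}"
  have "card C = (n + 1) choose 2"
    unfolding C_def diagram_staircase[symmetric] card_diagram by (rule sum_staircase)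
  then have "bij_betw case_prod fillings (linear_extensions C shifted_prec)"
    using stair_vertex_pp_iff_shifted_prec_mono[of _ n]
    by (intro bij_betw_byWitness[where f' = curry]) (auto simp: fillings_def C_def linear_extensions_def bij_betw_def)
  then show ?thesis
    unfolding p_stair_def num_shifted_syt_def diagram_staircase fillings_def[symmetric] C_def[symmetric]
    by (rule bij_betw_same_card)
qed

theorem corollary5p41:
  fixes n :: nat
  assumes "n \<ge> 1"
  shows "real (p_stair n) =
    real (fact ((n + 1) choose 2) * (\<Prod>k=1..n-1. fact k)) / real (\<Prod>k=1..n. fact (2 * k - 1))"
proof -
  have "real (p_stair n) = thrall n (\<lambda>j. n + 1 - j)"
    unfolding p_stair_eq_num_shifted_syt by (rule num_shifted_syt_eq_thrall[OF strict_profile_staircase])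
  also have "\<dots> = fact ((n + 1) choose 2) * (\<Prod>k=1..n-1. fact k) / (\<Prod>k=1..n. fact (2 * k - 1))"
    by (rule thrall_staircase[OF assms])
  finally show ?thesis
    by simp
qed

end
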